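(* All kernels of an orientation of a claw-free graph have the same cardinality.
   Context: A graph is claw-free if no three vertices with a common neighbor form a stable set. An orientation of a graph orients each edge in exactly one direction (not necessarily clique-acyclic). A kernel of a digraph $D=(V,A)$ is a set $S$ of pairwise non-adjacent vertices such that every $u\in V\setminus S$ has an arc $(u,v)\in A$ with $v\in S$. *)

theory Defs
  imports Main
begin

definition simple_graph :: "'a set \<Rightarrow> ('a \<Rightarrow> 'a \<Rightarrow> bool) \<Rightarrow> bool" where
  "simple_graph V E \<longleftrightarrow> finite V \<and>
     (\<forall>u v. E u v \<longrightarrow> u \<in> V \<and> v \<in> V) \<and>
     (\<forall>u v. E u v \<longrightarrow> E v u) \<and> (\<forall>v. \<not> E v v)"

definition claw_free :: "'a set \<Rightarrow> ('a \<Rightarrow> 'a \<Rightarrow> bool) \<Rightarrow> bool" where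
  "claw_free V E \<longleftrightarrow>
     (\<forall>c\<in>V. \<forall>x\<in>V. \<forall>y\<in>V. \<forall>z\<in>V.
        E c x \<and> E c y \<and> E c z \<and> x \<noteq> y \<and> x \<noteq> z \<and> y \<noteq> z \<longrightarrow>
        E x y \<or> E x z \<or> E y z)"

definition orientation :: "'a set \<Rightarrow> ('a \<Rightarrow> 'a \<Rightarrow> bool) \<Rightarrow> ('a \<Rightarrow> 'a \<Rightarrow> bool) \<Rightarrow> bool" where
  "orientation V E A \<longleftrightarrow>
     (\<forall>u v. E u v \<longleftrightarrow> A u v \<or> A v u) \<and> (\<forall>u v. \<not> (A u v \<and> A v u))"

definition kernel :: "'a set \<Rightarrow> ('a \<Rightarrow> 'a \<Rightarrow> bool) \<Rightarrow> 'a set \<Rightarrow> bool" where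
  "kernel V A S \<longleftrightarrow> S \<subseteq> V \<and>
     (\<forall>u\<in>S. \<forall>v\<in>S. \<not> A u v) \<and>
     (\<forall>u\<in>V - S. \<exists>v\<in>S. A u v)"

end

theory Submission
  imports Defs
begin

text \<open>Let \<open>P = S - T\<close> and \<open>Q = T - S\<close>, and count the edges between \<open>P\<close> and \<open>Q\<close>.
Every vertex of \<open>P\<close> has an arc into the kernel \<open>T\<close>, necessarily into \<open>Q\<close>, and symmetrically;
since each such edge carries exactly one arc, there are at least \<open>|P| + |Q|\<close> of them.
On the other hand \<open>P\<close> and \<open>Q\<close> are independent, so by claw-freeness every vertex has at most
two neighbours in either of them; hence there are at most \<open>2|P|\<close> and at most \<open>2|Q|\<close> edges.
Together this forces \<open>|P| = |Q|\<close>.\<close>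

lemma card_le_card_Sigma:
  assumes "finite X" and "\<And>x. x \<in> X \<Longrightarrow> finite (F x) \<and> F x \<noteq> {}"
  shows "card X \<le> card (Sigma X F)"
proof -
  have "card X = (\<Sum>x\<in>X. 1)" by simp
  also have "\<dots> \<le> (\<Sum>x\<in>X. card (F x))"
    using assms(2) by (intro sum_mono) (simp add: Suc_leI card_gt_0_iff)
  also have "\<dots> = card (Sigma X F)" using assms by simp
  finally show ?thesis .
qed

lemma card_Sigma_le_mult:
  assumes "finite X" and "\<And>x. x \<in> X \<Longrightarrow> finite (F x) \<and> card (F x) \<le> k"
  shows "card (Sigma X F) \<le> k * card X"
proof -
  have "card (Sigma X F) = (\<Sum>x\<in>X. card (F x))" using assms by simp
  also have "\<dots> \<le> (\<Sum>x\<in>X. k)" using assms(2) by (intro sum_mono) simp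
  finally show ?thesis by (simp add: mult.commute)
qed

lemma card_edges_eq_card_arcs:
  assumes "orientation V E A" and "finite X" and "finite Y"
  shows "card (SIGMA x:X. {y \<in> Y. E x y})
           = card (SIGMA x:X. {y \<in> Y. A x y}) + card (SIGMA y:Y. {x \<in> X. A y x})"
proof -
  have split: "(SIGMA x:X. {y \<in> Y. E x y})
                 = (SIGMA x:X. {y \<in> Y. A x y}) \<union> prod.swap ` (SIGMA y:Y. {x \<in> X. A y x})"
    using assms(1) unfolding orientation_def by auto
  have disjoint: "(SIGMA x:X. {y \<in> Y. A x y}) \<inter> prod.swap ` (SIGMA y:Y. {x \<in> X. A y x}) = {}"
    using assms(1) unfolding orientation_def by auto
  have "card (prod.swap ` (SIGMA y:Y. {x \<in> X. A y x})) = card (SIGMA y:Y. {x \<in> X. A y x})"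
    by (simp add: card_image)
  then show ?thesis
    unfolding split using assms(2,3) disjoint by (simp add: card_Un_disjoint)
qed

lemma card_edges_between_commute:
  assumes "\<And>u v. E u v \<Longrightarrow> E v u"
  shows "card (SIGMA x:X. {y \<in> Y. E x y}) = card (SIGMA y:Y. {x \<in> X. E y x})"
proof -
  have "(SIGMA x:X. {y \<in> Y. E x y}) = prod.swap ` (SIGMA y:Y. {x \<in> X. E y x})"
    using assms by auto
  then show ?thesis by (simp add: card_image)
qed

lemma kernel_independent:
  assumes "orientation V E A" and "kernel V A S" and "u \<in> S" and "v \<in> S"
  shows "\<not> E u v"
  using assms unfolding orientation_def kernel_def by blast

lemma kernel_arc_into_Diff:
  assumes "kernel V A S" and "kernel V A T" and "x \<in> S - T"
  shows "\<exists>y \<in> T - S. A x y"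
proof -
  obtain y where "y \<in> T" and "A x y"
    using assms unfolding kernel_def by blast
  moreover have "y \<notin> S"
    using \<open>A x y\<close> assms(1,3) unfolding kernel_def by blast
  ultimately show ?thesis by blast
qed

lemma claw_free_card_neighbours_in_independent:
  assumes "simple_graph V E" and "claw_free V E" and "u \<in> V"
    and "I \<subseteq> V" and independent: "\<And>x y. x \<in> I \<Longrightarrow> y \<in> I \<Longrightarrow> \<not> E x y"
  shows "card {v \<in> I. E u v} \<le> 2"
proof (rule ccontr)
  assume "\<not> card {v \<in> I. E u v} \<le> 2"
  then have "3 \<le> card {v \<in> I. E u v}" by simp
  then obtain N where "N \<subseteq> {v \<in> I. E u v}" and "card N = 3"
    by (rule obtain_subset_with_card_n)
  then obtain x y z where "x \<in> I" "y \<in> I" "z \<in> I" "E u x" "E u y" "E u z"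
      and "x \<noteq> y" "y \<noteq> z" "x \<noteq> z"
    by (auto simp: card_3_iff)
  moreover have "x \<in> V" "y \<in> V" "z \<in> V" using calculation(1-3) assms(4) by auto
  ultimately have "E x y \<or> E x z \<or> E y z"
    using assms(2,3) unfolding claw_free_def by simp
  with independent \<open>x \<in> I\<close> \<open>y \<in> I\<close> \<open>z \<in> I\<close> show False by blast
qed

lemma card_Diff_kernels_le_card_edges:
  assumes "finite V" and "orientation V E A" and "kernel V A S" and "kernel V A T"
  shows "card (S - T) + card (T - S) \<le> card (SIGMA p:S - T. {q \<in> T - S. E p q})"
proof -
  have fin: "finite (S - T)" "finite (T - S)"
    using assms(1,3,4) unfolding kernel_def by (auto intro: finite_subset)
  have "card (S - T) \<le> card (SIGMA p:S - T. {q \<in> T - S. A p q})"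
    using kernel_arc_into_Diff[OF assms(3,4)]
    by (intro card_le_card_Sigma fin) (auto intro: rev_finite_subset[OF fin(2)])
  moreover have "card (T - S) \<le> card (SIGMA q:T - S. {p \<in> S - T. A q p})"
    using kernel_arc_into_Diff[OF assms(4,3)]
    by (intro card_le_card_Sigma fin) (auto intro: rev_finite_subset[OF fin(1)])
  ultimately show ?thesis
    using card_edges_eq_card_arcs[OF assms(2) fin] by linarith
qed

lemma claw_free_card_edges_into_kernel_le:
  assumes "simple_graph V E" and "claw_free V E" and "orientation V E A" and "kernel V A T"
    and "X \<subseteq> V" and "Y \<subseteq> T"
  shows "card (SIGMA x:X. {y \<in> Y. E x y}) \<le> 2 * card X"
proof (rule card_Sigma_le_mult)
  show "finite X"
    using assms(1,5) unfolding simple_graph_def by (auto intro: finite_subset)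
  have "Y \<subseteq> V" "finite Y"
    using assms(1,4,6) unfolding kernel_def simple_graph_def by (auto intro: finite_subset)
  moreover have "\<not> E u v" if "u \<in> Y" "v \<in> Y" for u v
    using kernel_independent[OF assms(3,4)] assms(6) that by blast
  ultimately show "finite {y \<in> Y. E x y} \<and> card {y \<in> Y. E x y} \<le> 2" if "x \<in> X" for x
    using claw_free_card_neighbours_in_independent[OF assms(1,2)] assms(5) that by auto
qed

theorem proposition4:
  fixes V :: "'a set" and E A :: "'a \<Rightarrow> 'a \<Rightarrow> bool" and S T :: "'a set"
  assumes "simple_graph V E"
    and "claw_free V E"
    and "orientation V E A"
    and "kernel V A S"
    and "kernel V A T"
  shows "card S = card T"
proof -
  have "finite V" and sym: "\<And>u v. E u v \<Longrightarrow> E v u"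
    using assms(1) unfolding simple_graph_def by blast+
  have "S \<subseteq> V" "T \<subseteq> V"
    using assms(4,5) unfolding kernel_def by blast+
  have "card (S - T) + card (T - S) \<le> card (SIGMA p:S - T. {q \<in> T - S. E p q})"
    using card_Diff_kernels_le_card_edges[OF \<open>finite V\<close> assms(3-5)] .
  moreover have "card (SIGMA p:S - T. {q \<in> T - S. E p q}) \<le> 2 * card (S - T)"
    using \<open>S \<subseteq> V\<close> by (intro claw_free_card_edges_into_kernel_le[OF assms(1-3,5)]) auto
  moreover have "card (SIGMA q:T - S. {p \<in> S - T. E q p}) \<le> 2 * card (T - S)"
    using \<open>T \<subseteq> V\<close> by (intro claw_free_card_edges_into_kernel_le[OF assms(1-4)]) auto
  ultimately have "card (S - T) = card (T - S)"
    using card_edges_between_commute[of E, OF sym, of "S - T" "T - S"] by linarith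
  moreover have "finite S" "finite T"
    using \<open>S \<subseteq> V\<close> \<open>T \<subseteq> V\<close> \<open>finite V\<close> by (auto intro: finite_subset)
  ultimately show ?thesis
    using card_Int_Diff[of S T] card_Int_Diff[of T S] by (simp add: Int_commute)
qed

end
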